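(* The ballean $(\omega,\mathfrak{M}_\omega)$ does not have bounded growth.
   Context: A ballean $(X,\mathcal{E})$ is a set with a coarse structure. $E[x]=\{y:(x,y)\in E\}$. $Y$ is bounded if $Y\subseteq E[x]$ for some $x$ and $E\in\mathcal{E}$; $\mathcal{B}_X$ is the family of bounded sets. $(X,\mathcal{E})$ has bounded growth if there is a map $f:X\to\mathcal{B}_X$ such that $\bigcup_{x\in B}f(x)\in\mathcal{B}_X$ for every $B\in\mathcal{B}_X$, and for every $E\in\mathcal{E}$ there is $C\in\mathcal{B}_X$ with $E[x]\subseteq f(x)$ for all $x\in X\setminus C$. $\mathfrak{M}_\omega$ is the coarse structure on $\omega$ with base $\{M_{\mathcal{P}}\}$, where $\mathcal{P}$ ranges over coverings of $\omega$ by finite sets such that for each $x\in\omega$ the set $\bigcup\{P'\in\mathcal{P}:x\in P'\}$ is finite, and $M_{\mathcal{P}}=\{(x,y):x,y\in P\text{ for some }P\in\mathcal{P}\}$; its bounded sets are the finite subsets of $\omega$. *)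

theory Defs
  imports Main
begin

definition ball_of :: "('a \<times> 'a) set \<Rightarrow> 'a \<Rightarrow> 'a set" where
  "ball_of E x = {y. (x, y) \<in> E}"

definition bounded_in :: "'a set \<Rightarrow> ('a \<times> 'a) set set \<Rightarrow> 'a set \<Rightarrow> bool" where
  "bounded_in X \<E> Y \<longleftrightarrow> (\<exists>x\<in>X. \<exists>E\<in>\<E>. Y \<subseteq> ball_of E x)"

definition has_bounded_growth :: "'a set \<Rightarrow> ('a \<times> 'a) set set \<Rightarrow> bool" where
  "has_bounded_growth X \<E> \<longleftrightarrow>
     (\<exists>f. (\<forall>x\<in>X. f x \<subseteq> X \<and> bounded_in X \<E> (f x)) \<and>
          (\<forall>B. B \<subseteq> X \<and> bounded_in X \<E> B \<longrightarrow> bounded_in X \<E> (\<Union>x\<in>B. f x)) \<and>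
          (\<forall>E\<in>\<E>. \<exists>C. C \<subseteq> X \<and> bounded_in X \<E> C \<and>
                    (\<forall>x\<in>X - C. ball_of E x \<subseteq> f x)))"

definition admissible_cover :: "nat set set \<Rightarrow> bool" where
  "admissible_cover \<P> \<longleftrightarrow> \<Union>\<P> = UNIV \<and> (\<forall>P\<in>\<P>. finite P) \<and>
     (\<forall>x. finite (\<Union>{P\<in>\<P>. x \<in> P}))"

definition M_cover :: "nat set set \<Rightarrow> (nat \<times> nat) set" where
  "M_cover \<P> = {(x, y). \<exists>P\<in>\<P>. x \<in> P \<and> y \<in> P}"

text \<open>The coarse structure M_omega: generated by the base {M_P}, i.e. all
  entourages contained in some M_P.\<close>
definition M_omega :: "(nat \<times> nat) set set" where
  "M_omega = {E. \<exists>\<P>. admissible_cover \<P> \<and> E \<subseteq> M_cover \<P>}"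

end

theory Submission
  imports Defs
begin

text \<open>Bounded sets of \<open>(\<omega>, M\<^sub>\<omega>)\<close> are finite, so a witness \<open>f\<close> for bounded growth has
  finite values. Choose \<open>g x > x\<close> outside \<open>f x\<close>. The pairs \<open>{x, g x}\<close> form an admissible
  cover, because a point \<open>y\<close> can only lie in its own pair and in pairs \<open>{x, g x}\<close> with
  \<open>x < y\<close>. The corresponding entourage has \<open>g x\<close> in the ball around every \<open>x\<close>, so no
  finite exceptional set lets \<open>f\<close> absorb its balls.\<close>

lemma bounded_in_M_omega_imp_finite:
  assumes "bounded_in UNIV M_omega Y"
  shows "finite Y"
proof -
  obtain x E where E: "E \<in> M_omega" "Y \<subseteq> ball_of E x"
    using assms unfolding bounded_in_def by blast
  then obtain \<P> where \<P>: "admissible_cover \<P>" "E \<subseteq> M_cover \<P>"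
    unfolding M_omega_def by blast
  have "ball_of E x \<subseteq> \<Union>{P\<in>\<P>. x \<in> P}"
    using \<P>(2) unfolding ball_of_def M_cover_def by blast
  moreover have "finite (\<Union>{P\<in>\<P>. x \<in> P})"
    using \<P>(1) unfolding admissible_cover_def by blast
  ultimately show ?thesis
    using E(2) by (meson finite_subset subset_trans)
qed

lemma obtain_escaping_successor:
  fixes F :: "nat \<Rightarrow> nat set"
  assumes "\<And>x. finite (F x)"
  obtains g where "\<And>x. x < g x" and "\<And>x. g x \<notin> F x"
proof -
  have "\<exists>y. x < y \<and> y \<notin> F x" for x
    using infinite_Ioi[of x] assms[of x] finite_subset[of "{x<..}" "F x"] by auto
  then show ?thesis
    using that by metis
qed

lemma admissible_cover_successor_pairs:
  fixes g :: "nat \<Rightarrow> nat"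
  assumes "\<And>x. x < g x"
  shows "admissible_cover (range (\<lambda>x. {x, g x}))"
  unfolding admissible_cover_def
proof (intro conjI allI ballI)
  show "\<Union>(range (\<lambda>x. {x, g x})) = UNIV" by blast
  show "finite P" if "P \<in> range (\<lambda>x. {x, g x})" for P
    using that by auto
  fix y
  have "\<Union>{P \<in> range (\<lambda>x. {x, g x}). y \<in> P} \<subseteq> {..y} \<union> {g y}"
  proof
    fix z assume "z \<in> \<Union>{P \<in> range (\<lambda>x. {x, g x}). y \<in> P}"
    then obtain x where x: "y \<in> {x, g x}" "z \<in> {x, g x}" by auto
    show "z \<in> {..y} \<union> {g y}"
    proof (cases "y = x")
      case False
      with x(1) have "y = g x" by simp
      with x(2) assms[of x] show ?thesis by auto
    qed (use x in auto)
  qed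
  then show "finite (\<Union>{P \<in> range (\<lambda>x. {x, g x}). y \<in> P})"
    by (rule finite_subset) simp
qed

theorem mainTheorem12:
  shows "\<not> has_bounded_growth (UNIV :: nat set) M_omega"
proof
  assume "has_bounded_growth (UNIV :: nat set) M_omega"
  then obtain f where
    f_bounded: "\<forall>x. bounded_in UNIV M_omega (f x)" and
    f_absorbs: "\<forall>E\<in>M_omega.
      \<exists>C. bounded_in UNIV M_omega C \<and> (\<forall>x\<in>UNIV - C. ball_of E x \<subseteq> f x)"
    unfolding has_bounded_growth_def by auto
  have f_finite: "finite (f x)" for x
    using f_bounded bounded_in_M_omega_imp_finite by blast
  obtain g where g_gt: "\<And>x. x < g x" and g_escapes: "\<And>x. g x \<notin> f x"
    using obtain_escaping_successor[of f, OF f_finite] by blast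
  let ?E = "M_cover (range (\<lambda>x. {x, g x}))"
  have "?E \<in> M_omega"
    unfolding M_omega_def using admissible_cover_successor_pairs[OF g_gt] by blast
  with f_absorbs obtain C where C_bounded: "bounded_in UNIV M_omega C"
    and C: "\<forall>x\<in>UNIV - C. ball_of ?E x \<subseteq> f x"
    by blast
  obtain x where "x \<notin> C"
    using ex_new_if_finite[OF infinite_UNIV_nat bounded_in_M_omega_imp_finite[OF C_bounded]] by blast
  with C have "ball_of ?E x \<subseteq> f x"
    by blast
  moreover have "g x \<in> ball_of ?E x"
    unfolding ball_of_def M_cover_def by blast
  ultimately show False
    using g_escapes by blast
qed

end
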